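(* Let $L\subseteq B_i$ be an SINR-feasible set of links in a bucket $B_i$, let $e\in B_i$, and let $L^\ell=\{e'\in L:d_{e'}\le d_{e'e}\}$. Then $\sum_{e'\in L^\ell}\bar a_{e'}(e)\le C$ for a constant $C$ depending only on $\alpha$ and $\varepsilon$.
   Context: Constants: $\alpha\ge0$, $N>0$, $\beta>0$. Nodes lie in the Euclidean plane. A link is $e=(s_e,r_e,P_e)$; $\mathcal{L}$ is the set of links. $d_e=d(s_e,r_e)$, $d_{e'e}=d(s_{e'},r_e)$, $S_e=P_e/d_e^\alpha$, $S_{e'e}=P_{e'}/d_{e'e}^\alpha$, $\gamma_e=\beta S_e/(S_e-\beta N)$, $\hat a_{e'}(e)=S_{e'e}/S_e$, $a_{e'}(e)=\gamma_e\hat a_{e'}(e)$, $\bar a_{e'}(e)=\min\{1,a_{e'}(e)\}$. $L$ is SINR-feasible if $S_e/(N+\sum_{e'\in L\setminus\{e\}}S_{e'e})\ge\beta$ for all $e\in L$. Buckets: $S_{\min}=\min_{e\in\mathcal{L}}S_e$, $B_i=\{e\in\mathcal{L}:2^iS_{\min}\le S_e<2^{i+1}S_{\min}\}$. Standing assumption: there is a constant $\varepsilon>0$ with $S_e/N\ge(1+\varepsilon)\beta$ for all $e\in\mathcal{L}$. *)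

theory Defs
  imports "HOL-Analysis.Analysis"
begin

type_synonym point = "real \<times> real"
type_synonym link = "point \<times> point \<times> real"

definition sender :: "link \<Rightarrow> point" where "sender e = fst e"
definition receiver :: "link \<Rightarrow> point" where "receiver e = fst (snd e)"
definition power :: "link \<Rightarrow> real" where "power e = snd (snd e)"

definition dl :: "link \<Rightarrow> real" where "dl e = dist (sender e) (receiver e)"
definition dx :: "link \<Rightarrow> link \<Rightarrow> real" where "dx e' e = dist (sender e') (receiver e)"

definition S :: "real \<Rightarrow> link \<Rightarrow> real" where
  "S \<alpha> e = power e / (dl e powr \<alpha>)"

(* interference S_{e'e}; meaningful only when dx e' e > 0 (otherwise it is infinite,
   which is handled explicitly in feasible and abar below) *)
definition Sx :: "real \<Rightarrow> link \<Rightarrow> link \<Rightarrow> real" where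
  "Sx \<alpha> e' e = power e' / (dx e' e powr \<alpha>)"

definition gam :: "real \<Rightarrow> real \<Rightarrow> real \<Rightarrow> link \<Rightarrow> real" where
  "gam \<alpha> \<beta> N e = \<beta> * S \<alpha> e / (S \<alpha> e - \<beta> * N)"

definition ahat :: "real \<Rightarrow> link \<Rightarrow> link \<Rightarrow> real" where
  "ahat \<alpha> e' e = Sx \<alpha> e' e / S \<alpha> e"

definition aff :: "real \<Rightarrow> real \<Rightarrow> real \<Rightarrow> link \<Rightarrow> link \<Rightarrow> real" where
  "aff \<alpha> \<beta> N e' e = gam \<alpha> \<beta> N e * ahat \<alpha> e' e"

(* abar = min 1 a; if the sender of e' sits on the receiver of e, a is infinite, so abar = 1 *)
definition abar :: "real \<Rightarrow> real \<Rightarrow> real \<Rightarrow> link \<Rightarrow> link \<Rightarrow> real" where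
  "abar \<alpha> \<beta> N e' e = (if dx e' e = 0 then 1 else min 1 (aff \<alpha> \<beta> N e' e))"

(* SINR-feasibility; zero-distance interference is infinite, hence infeasible *)
definition feasible :: "real \<Rightarrow> real \<Rightarrow> real \<Rightarrow> link set \<Rightarrow> bool" where
  "feasible \<alpha> \<beta> N L \<longleftrightarrow>
     (\<forall>e\<in>L. (\<forall>e'\<in>L - {e}. dx e' e > 0) \<and>
             S \<alpha> e / (N + (\<Sum>e'\<in>L - {e}. Sx \<alpha> e' e)) \<ge> \<beta>)"

definition Smin :: "real \<Rightarrow> link set \<Rightarrow> real" where
  "Smin \<alpha> Ls = Min (S \<alpha> ` Ls)"

definition bucket :: "real \<Rightarrow> link set \<Rightarrow> nat \<Rightarrow> link set" where
  "bucket \<alpha> Ls i = {e\<in>Ls. 2 ^ i * Smin \<alpha> Ls \<le> S \<alpha> e \<and> S \<alpha> e < 2 ^ (i + 1) * Smin \<alpha> Ls}"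

end

theory Submission imports Defs begin

text \<open>Let \<open>f\<close> be the link of \<open>L\<^sup>\<ell>\<close> whose sender is closest to \<open>r\<^sub>e\<close>. It contributes at most 1.
  For every other \<open>g \<in> L\<^sup>\<ell>\<close> the triangle inequality gives \<open>d(s\<^sub>g, r\<^sub>f) \<le> 3 d(s\<^sub>g, r\<^sub>e)\<close>, so the
  interference of \<open>g\<close> at \<open>e\<close> is at most \<open>3\<^sup>\<alpha>\<close> times its interference at \<open>f\<close>; since \<open>e\<close> and \<open>f\<close>
  lie in the same bucket, \<open>S\<^sub>f < 2 S\<^sub>e\<close>. Summing, feasibility of \<open>L\<close> at \<open>f\<close> bounds the total
  interference at \<open>f\<close> by \<open>S\<^sub>f / \<beta>\<close>, and \<open>\<gamma>\<^sub>e / \<beta> \<le> (1 + \<epsilon>) / \<epsilon>\<close> by the standing assumption.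
  Hence \<open>C = 1 + 2 \<sqdot> 3\<^sup>\<alpha> (1 + \<epsilon>) / \<epsilon>\<close> works.\<close>

lemma dl_pos_power_pos_if_S_pos:
  assumes "S \<alpha> h > 0"
  shows "dl h > 0" "power h > 0"
proof -
  have "dl h \<noteq> 0" using assms by (auto simp: S_def)
  then show "dl h > 0" by (simp add: dl_def)
  then show "power h > 0" using assms by (simp add: S_def zero_less_divide_iff)
qed

lemma Sx_nonneg: "power g > 0 \<Longrightarrow> Sx \<alpha> g f \<ge> 0"
  by (simp add: Sx_def)

lemma dx_le_three_times:
  assumes "dl f \<le> dx f e" "dx f e \<le> dx g e"
  shows "dx g f \<le> 3 * dx g e"
proof -
  have "dx g f \<le> dx g e + dist (receiver e) (receiver f)"
    unfolding dx_def by (rule dist_triangle)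
  moreover have "dist (receiver e) (receiver f) \<le> dx f e + dl f"
    using dist_triangle[of "receiver e" "receiver f" "sender f"]
    by (simp add: dx_def dl_def dist_commute)
  ultimately show ?thesis using assms by linarith
qed

lemma Sx_le_powr_mult_if_dx_le:
  assumes "\<alpha> \<ge> 0" "power g > 0" "dx g f > 0" "dx g f \<le> c * dx g e"
  shows "Sx \<alpha> g e \<le> c powr \<alpha> * Sx \<alpha> g f"
proof -
  have "c > 0" "dx g e > 0"
  proof -
    have "c * dx g e > 0" using assms(3,4) by linarith
    moreover have "dx g e \<ge> 0" by (simp add: dx_def)
    ultimately show "c > 0" "dx g e > 0" by (simp_all add: zero_less_mult_iff)
  qed
  have "dx g f powr \<alpha> \<le> c powr \<alpha> * dx g e powr \<alpha>"
    using assms \<open>c > 0\<close> \<open>dx g e > 0\<close> powr_mono2[OF assms(1), of "dx g f" "c * dx g e"]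
    by (simp add: powr_mult)
  then have "power g / dx g e powr \<alpha> \<le> power g / (dx g f powr \<alpha> / c powr \<alpha>)"
    using assms \<open>c > 0\<close> \<open>dx g e > 0\<close>
    by (intro divide_left_mono) (auto simp: divide_le_eq mult.commute)
  then show ?thesis by (simp add: Sx_def ac_simps)
qed

lemma gam_bounds:
  assumes "\<epsilon> > 0" "\<beta> > 0" "N > 0" "S \<alpha> e \<ge> (1 + \<epsilon>) * \<beta> * N"
  shows "gam \<alpha> \<beta> N e \<ge> 0" "gam \<alpha> \<beta> N e / \<beta> \<le> (1 + \<epsilon>) / \<epsilon>"
proof -
  have "\<epsilon> * \<beta> * N > 0" using assms by simp
  then have margin: "S \<alpha> e - \<beta> * N \<ge> \<epsilon> * \<beta> * N" "S \<alpha> e - \<beta> * N > 0"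
    using assms(4) by (simp_all add: algebra_simps)
  have gam_div: "gam \<alpha> \<beta> N e / \<beta> = S \<alpha> e / (S \<alpha> e - \<beta> * N)"
    using assms(2) by (simp add: gam_def)
  have "S \<alpha> e \<ge> 0" using margin(2) mult_pos_pos[OF assms(2,3)] by linarith
  then show "gam \<alpha> \<beta> N e \<ge> 0"
    using margin assms(2) by (simp add: gam_def)
  have "S \<alpha> e * \<epsilon> \<le> (1 + \<epsilon>) * (S \<alpha> e - \<beta> * N)"
    using assms(4) by (simp add: algebra_simps)
  then show "gam \<alpha> \<beta> N e / \<beta> \<le> (1 + \<epsilon>) / \<epsilon>"
    unfolding gam_div using margin(2) assms(1) by (simp add: divide_simps mult.commute)
qed

lemma abar_le_scaled_interference:
  assumes "\<alpha> \<ge> 0" "gam \<alpha> \<beta> N e \<ge> 0" "S \<alpha> f > 0" "S \<alpha> f < 2 * S \<alpha> e" "S \<alpha> g > 0"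
    and "dl g \<le> dx g e" "dx g f > 0" "dl f \<le> dx f e" "dx f e \<le> dx g e"
  shows "abar \<alpha> \<beta> N g e \<le> 2 * 3 powr \<alpha> * gam \<alpha> \<beta> N e / S \<alpha> f * Sx \<alpha> g f"
proof -
  note dl_pos_power_pos_if_S_pos[OF \<open>S \<alpha> g > 0\<close>]
  have "dx g e > 0" using \<open>dl g > 0\<close> \<open>dl g \<le> dx g e\<close> by linarith
  have "dx g f \<le> 3 * dx g e" using assms(8,9) by (rule dx_le_three_times)
  have "Sx \<alpha> g e \<le> 3 powr \<alpha> * Sx \<alpha> g f"
    by (rule Sx_le_powr_mult_if_dx_le) fact+
  have "abar \<alpha> \<beta> N g e \<le> gam \<alpha> \<beta> N e * Sx \<alpha> g e / S \<alpha> e"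
    using \<open>dx g e > 0\<close> by (simp add: abar_def aff_def ahat_def)
  also have "\<dots> \<le> gam \<alpha> \<beta> N e * (3 powr \<alpha> * Sx \<alpha> g f) / S \<alpha> e"
    using assms(2-4) \<open>Sx \<alpha> g e \<le> _\<close> by (intro divide_right_mono mult_left_mono) auto
  also have "\<dots> \<le> gam \<alpha> \<beta> N e * (3 powr \<alpha> * Sx \<alpha> g f) * (2 / S \<alpha> f)"
  proof -
    have "1 / S \<alpha> e \<le> 2 / S \<alpha> f" using assms(3,4) by (simp add: divide_simps)
    moreover have "gam \<alpha> \<beta> N e * (3 powr \<alpha> * Sx \<alpha> g f) \<ge> 0"
      using assms(2) Sx_nonneg[OF \<open>power g > 0\<close>] by simp
    ultimately show ?thesis by (metis mult_left_mono times_divide_eq_right mult_1_right)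
  qed
  also have "\<dots> = 2 * 3 powr \<alpha> * gam \<alpha> \<beta> N e / S \<alpha> f * Sx \<alpha> g f" by simp
  finally show ?thesis .
qed

lemma feasible_interference_le:
  assumes "feasible \<alpha> \<beta> N L" "f \<in> L" "\<beta> > 0" "N > 0" "\<forall>g\<in>L. power g > 0"
  shows "(\<Sum>g\<in>L - {f}. Sx \<alpha> g f) \<le> S \<alpha> f / \<beta>"
proof -
  let ?I = "\<Sum>g\<in>L - {f}. Sx \<alpha> g f"
  have "?I \<ge> 0" using assms(5) Sx_nonneg by (intro sum_nonneg) auto
  moreover have "S \<alpha> f / (N + ?I) \<ge> \<beta>" using assms(1,2) by (simp add: feasible_def)
  ultimately have "\<beta> * N + \<beta> * ?I \<le> S \<alpha> f"
    using assms(4) by (simp add: divide_simps distrib_left)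
  moreover have "\<beta> * N > 0" using assms(3,4) by simp
  ultimately have "\<beta> * ?I \<le> S \<alpha> f" by linarith
  then show ?thesis using assms(3) by (simp add: field_simps)
qed

lemma sum_abar_near_le:
  assumes "\<alpha> \<ge> 0" "\<epsilon> > 0" "\<beta> > 0" "N > 0" "finite L" "feasible \<alpha> \<beta> N L"
    and S_pos: "\<forall>g\<in>L. S \<alpha> g > 0"
    and same_scale: "\<forall>g\<in>L. S \<alpha> g < 2 * S \<alpha> e"
    and S_e: "S \<alpha> e \<ge> (1 + \<epsilon>) * \<beta> * N"
  shows "(\<Sum>g\<in>{g\<in>L. dl g \<le> dx g e}. abar \<alpha> \<beta> N g e) \<le> 1 + 2 * 3 powr \<alpha> * ((1 + \<epsilon>) / \<epsilon>)"
    (is "(\<Sum>g\<in>?A. _) \<le> ?C")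
proof (cases "?A = {}")
  case True
  have "0 \<le> ?C" using assms(2) by simp
  then show ?thesis unfolding True by simp
next
  case False
  have "finite ?A" using assms(5) by simp
  obtain f where "f \<in> ?A" and f_nearest: "\<forall>g\<in>?A. dx f e \<le> dx g e"
    using arg_min_if_finite[OF \<open>finite ?A\<close> False, of "\<lambda>g. dx g e"]
    by (metis (no_types, lifting) not_le)
  then have "f \<in> L" "dl f \<le> dx f e" by auto
  have power_pos: "\<forall>g\<in>L. power g > 0"
    using S_pos dl_pos_power_pos_if_S_pos(2) by blast
  have S_f: "S \<alpha> f > 0" "S \<alpha> f < 2 * S \<alpha> e" using S_pos same_scale \<open>f \<in> L\<close> by auto
  note gam_nonneg = gam_bounds(1)[OF assms(2,3,4) S_e]
  note gam_le = gam_bounds(2)[OF assms(2,3,4) S_e]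
  define K where "K = 2 * 3 powr \<alpha> * gam \<alpha> \<beta> N e / S \<alpha> f"
  have "K \<ge> 0" using gam_nonneg S_f by (simp add: K_def)
  have abar_le: "abar \<alpha> \<beta> N g e \<le> K * Sx \<alpha> g f" if "g \<in> ?A - {f}" for g
  proof -
    have "g \<in> L" "dl g \<le> dx g e" using that by auto
    have "dx f e \<le> dx g e" using f_nearest that by blast
    have "dx g f > 0" using assms(6) \<open>f \<in> L\<close> \<open>g \<in> L\<close> that by (auto simp: feasible_def)
    have "S \<alpha> g > 0" using S_pos \<open>g \<in> L\<close> by blast
    from abar_le_scaled_interference[OF assms(1) gam_nonneg S_f this] show ?thesis
      unfolding K_def by (simp add: \<open>dl g \<le> dx g e\<close> \<open>dx g f > 0\<close> \<open>dl f \<le> dx f e\<close> \<open>dx f e \<le> dx g e\<close>)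
  qed
  have "(\<Sum>g\<in>?A - {f}. Sx \<alpha> g f) \<le> (\<Sum>g\<in>L - {f}. Sx \<alpha> g f)"
    using assms(5) power_pos Sx_nonneg by (intro sum_mono2) auto
  also have "\<dots> \<le> S \<alpha> f / \<beta>"
    using feasible_interference_le[OF assms(6) \<open>f \<in> L\<close> assms(3,4) power_pos] .
  finally have interference: "(\<Sum>g\<in>?A - {f}. Sx \<alpha> g f) \<le> S \<alpha> f / \<beta>" .
  have "(\<Sum>g\<in>?A. abar \<alpha> \<beta> N g e) = abar \<alpha> \<beta> N f e + (\<Sum>g\<in>?A - {f}. abar \<alpha> \<beta> N g e)"
    using \<open>finite ?A\<close> \<open>f \<in> ?A\<close> by (simp add: sum.remove)
  also have "\<dots> \<le> 1 + (\<Sum>g\<in>?A - {f}. K * Sx \<alpha> g f)"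
    by (rule add_mono) (simp add: abar_def, rule sum_mono, rule abar_le)
  also have "\<dots> = 1 + K * (\<Sum>g\<in>?A - {f}. Sx \<alpha> g f)"
    by (simp add: sum_distrib_left)
  also have "\<dots> \<le> 1 + K * (S \<alpha> f / \<beta>)"
    using mult_left_mono[OF interference \<open>K \<ge> 0\<close>] by simp
  also have "\<dots> = 1 + 2 * 3 powr \<alpha> * (gam \<alpha> \<beta> N e / \<beta>)"
    using S_f by (simp add: K_def)
  also have "\<dots> \<le> ?C"
    using gam_le by (intro add_left_mono mult_left_mono) auto
  finally show ?thesis .
qed

theorem lemma3:
  fixes \<alpha> \<epsilon> :: real
  assumes "\<alpha> \<ge> 0" and "\<epsilon> > 0"
  shows "\<exists>C. \<forall>(N::real) (\<beta>::real) (Ls::link set) (i::nat) (L::link set) (e::link).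
           N > 0 \<longrightarrow> \<beta> > 0 \<longrightarrow> finite Ls \<longrightarrow> Ls \<noteq> {} \<longrightarrow>
           (\<forall>f\<in>Ls. S \<alpha> f / N \<ge> (1 + \<epsilon>) * \<beta>) \<longrightarrow>
           L \<subseteq> bucket \<alpha> Ls i \<longrightarrow> feasible \<alpha> \<beta> N L \<longrightarrow> e \<in> bucket \<alpha> Ls i \<longrightarrow>
           (\<Sum>e'\<in>{e'\<in>L. dl e' \<le> dx e' e}. abar \<alpha> \<beta> N e' e) \<le> C"
proof (intro exI allI impI)
  fix N \<beta> :: real and Ls :: "link set" and i :: nat and L :: "link set" and e :: link
  assume "N > 0" "\<beta> > 0" "finite Ls" "Ls \<noteq> {}"
    and S_large: "\<forall>f\<in>Ls. S \<alpha> f / N \<ge> (1 + \<epsilon>) * \<beta>"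
    and L_bucket: "L \<subseteq> bucket \<alpha> Ls i" and "feasible \<alpha> \<beta> N L"
    and e_bucket: "e \<in> bucket \<alpha> Ls i"
  have "L \<subseteq> Ls" "e \<in> Ls" using L_bucket e_bucket by (auto simp: bucket_def)
  have S_ge: "S \<alpha> h \<ge> (1 + \<epsilon>) * \<beta> * N" if "h \<in> Ls" for h
    using S_large that \<open>N > 0\<close> by (simp add: field_simps)
  have "(1 + \<epsilon>) * \<beta> * N > 0" using assms \<open>\<beta> > 0\<close> \<open>N > 0\<close> by simp
  then have "\<forall>g\<in>L. S \<alpha> g > 0" using S_ge \<open>L \<subseteq> Ls\<close> by (meson less_le_trans subsetD)
  moreover have "\<forall>g\<in>L. S \<alpha> g < 2 * S \<alpha> e"
    using L_bucket e_bucket by (auto simp: bucket_def)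
  moreover have "finite L" using \<open>L \<subseteq> Ls\<close> \<open>finite Ls\<close> by (rule finite_subset)
  ultimately show "(\<Sum>e'\<in>{e'\<in>L. dl e' \<le> dx e' e}. abar \<alpha> \<beta> N e' e)
                   \<le> 1 + 2 * 3 powr \<alpha> * ((1 + \<epsilon>) / \<epsilon>)"
    using sum_abar_near_le[OF assms \<open>\<beta> > 0\<close> \<open>N > 0\<close> _ \<open>feasible \<alpha> \<beta> N L\<close>]
      S_ge[OF \<open>e \<in> Ls\<close>] by blast
qed

end
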